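(* Let $f:I\to[n]$ and $f':I'\to[n]$ be left active morphisms in $\Delta$ such that the claw $(f,f')$ is compatible, and consider their pullback square in $\Delta$ (with corners $I\cap I'$, $I$, $I'$, $[n]$), which is strongly biCartesian. Then the image of this square under the canonical functor $\Delta\to\Lambda$ is a pushout square in $\Lambda$.
   Context: $\Delta$: simplex category of $[n]=\{0<\dots<n\}$, weakly monotone maps; $f$ left active means $f(0)=0$. $\Lambda$: Connes' cyclic category with canonical functor $\Delta\to\Lambda$, $[n]\mapsto\langle n\rangle=(\mathbb{Z}/(n+1),+1)$, identifying $\Delta$ with the slice $\Lambda_{/\langle0\rangle}$ (forgetful functor). A pair $(f:I\to[n],f':I'\to[n])$ is compatible if (BC1) for each $i\in[n]$ at most one of $f^{-1}\{i\},f'^{-1}\{i\}$ is not a singleton, and (BC2) for each $0<i\le n$ at most one of $f(I),f'(I')$ fails to contain $\{i-1,i\}$. *)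

theory Defs
  imports Main
begin

text \<open>Objects [m] are represented by m::nat (the ordinal {0<...<m}).
  A morphism [m] -> [n] is represented by a function f :: nat => nat whose
  restriction to {0..m} is weakly monotone with values in {0..n}; values
  outside {0..m} are irrelevant (morphisms are compared on {0..m}).\<close>

definition delta_hom :: "nat \<Rightarrow> nat \<Rightarrow> (nat \<Rightarrow> nat) \<Rightarrow> bool" where
  "delta_hom m n f \<longleftrightarrow> (\<forall>i\<le>m. f i \<le> n) \<and> (\<forall>i j. i \<le> j \<and> j \<le> m \<longrightarrow> f i \<le> f j)"

definition left_active :: "(nat \<Rightarrow> nat) \<Rightarrow> bool" where
  "left_active f \<longleftrightarrow> f 0 = 0"

text \<open>Compatibility of a claw (f : [m] -> [n], f' : [m'] -> [n]), conditions (BC1), (BC2).\<close>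

definition compatible :: "nat \<Rightarrow> (nat \<Rightarrow> nat) \<Rightarrow> nat \<Rightarrow> (nat \<Rightarrow> nat) \<Rightarrow> nat \<Rightarrow> bool" where
  "compatible m f m' f' n \<longleftrightarrow>
     (\<forall>i\<le>n. card {j. j \<le> m \<and> f j = i} = 1 \<or> card {j. j \<le> m' \<and> f' j = i} = 1) \<and>
     (\<forall>i. 0 < i \<and> i \<le> n \<longrightarrow> {i - 1, i} \<subseteq> f ` {..m} \<or> {i - 1, i} \<subseteq> f' ` {..m'})"

definition delta_pullback ::
  "nat \<Rightarrow> (nat \<Rightarrow> nat) \<Rightarrow> nat \<Rightarrow> (nat \<Rightarrow> nat) \<Rightarrow> nat \<Rightarrow> (nat \<Rightarrow> nat) \<Rightarrow> (nat \<Rightarrow> nat) \<Rightarrow> nat \<Rightarrow> bool" where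
  "delta_pullback p g m g' m' f f' n \<longleftrightarrow>
     delta_hom p m g \<and> delta_hom p m' g' \<and> delta_hom m n f \<and> delta_hom m' n f' \<and>
     (\<forall>i\<le>p. f (g i) = f' (g' i)) \<and>
     (\<forall>q h h'. delta_hom q m h \<and> delta_hom q m' h' \<and> (\<forall>i\<le>q. f (h i) = f' (h' i)) \<longrightarrow>
        (\<exists>u. delta_hom q p u \<and> (\<forall>i\<le>q. g (u i) = h i \<and> g' (u i) = h' i) \<and>
             (\<forall>v. delta_hom q p v \<and> (\<forall>i\<le>q. g (v i) = h i \<and> g' (v i) = h' i) \<longrightarrow>
                  (\<forall>i\<le>q. v i = u i))))"

text \<open>Model of Lambda: objects <n> (n::nat); a morphism <m> -> <n> is represented by a
  weakly monotone F :: int => int with F (x + (m+1)) = F x + (n+1) (a morphism of the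
  paracyclic category), and two representatives define the same morphism of Lambda iff
  they differ by an integer multiple of n+1.\<close>

definition lam_rep :: "nat \<Rightarrow> nat \<Rightarrow> (int \<Rightarrow> int) \<Rightarrow> bool" where
  "lam_rep m n F \<longleftrightarrow> mono F \<and> (\<forall>x. F (x + int m + 1) = F x + int n + 1)"

definition lam_eq :: "nat \<Rightarrow> (int \<Rightarrow> int) \<Rightarrow> (int \<Rightarrow> int) \<Rightarrow> bool" where
  "lam_eq n F G \<longleftrightarrow> (\<exists>k::int. \<forall>x. F x = G x + k * (int n + 1))"

text \<open>The canonical functor Delta -> Lambda, [m] |-> <m>, on morphisms.\<close>

definition lam_of :: "nat \<Rightarrow> nat \<Rightarrow> (nat \<Rightarrow> nat) \<Rightarrow> int \<Rightarrow> int" where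
  "lam_of m n f x = int (f (nat (x mod (int m + 1)))) + (x div (int m + 1)) * (int n + 1)"

definition lam_pushout ::
  "nat \<Rightarrow> (int \<Rightarrow> int) \<Rightarrow> nat \<Rightarrow> (int \<Rightarrow> int) \<Rightarrow> nat \<Rightarrow> (int \<Rightarrow> int) \<Rightarrow> (int \<Rightarrow> int) \<Rightarrow> nat \<Rightarrow> bool" where
  "lam_pushout p A m B m' C D n \<longleftrightarrow>
     lam_rep p m A \<and> lam_rep p m' B \<and> lam_rep m n C \<and> lam_rep m' n D \<and>
     lam_eq n (C \<circ> A) (D \<circ> B) \<and>
     (\<forall>k X Y. lam_rep m k X \<and> lam_rep m' k Y \<and> lam_eq k (X \<circ> A) (Y \<circ> B) \<longrightarrow>
        (\<exists>Z. lam_rep n k Z \<and> lam_eq k (Z \<circ> C) X \<and> lam_eq k (Z \<circ> D) Y \<and>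
             (\<forall>W. lam_rep n k W \<and> lam_eq k (W \<circ> C) X \<and> lam_eq k (W \<circ> D) Y \<longrightarrow>
                  lam_eq k W Z)))"

end

theory Submission
  imports Defs
begin

(* Represent the images of g, g', f, f' by paracyclic maps A, B, C, D : Z -> Z.  A cocone
   X, Y under the square is glued to the map Z with Z (C x) = X x and Z (D x) = Y x.  The
   pullback property says that C x = D x' only happens over a common point of the corner, so
   X and Y agree there; (BC1) makes X and Y constant on fibres (a fibre of C with two points
   is hit by D, and conversely); (BC2), together with left activeness for the wrap-around
   step n -> n + 1, puts every unit step y -> y + 1 inside the image of C or of D, which
   makes Z monotone and C, D jointly surjective, hence Z unique. *)

definition covers_step :: "(int \<Rightarrow> int) \<Rightarrow> int \<Rightarrow> bool" where
  "covers_step F y \<longleftrightarrow> (\<exists>x x'. x \<le> x' \<and> F x = y \<and> F x' = y + 1)"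

lemma covers_stepI: "F x = y \<Longrightarrow> F x' = y + 1 \<Longrightarrow> x \<le> x' \<Longrightarrow> covers_step F y"
  unfolding covers_step_def by blast

lemma covers_step_in_range: "covers_step F y \<Longrightarrow> y \<in> range F"
  unfolding covers_step_def by blast

lemma mono_int_stepI:
  fixes F :: "int \<Rightarrow> 'a::order"
  assumes "\<And>y. F y \<le> F (y + 1)"
  shows "mono F"
proof (rule monoI)
  fix x y :: int
  assume "x \<le> y"
  then show "F x \<le> F y"
    by (induction y rule: int_ge_induct) (auto intro: order_trans assms)
qed

section \<open>Gluing paracyclic maps\<close>

lemma covers_step_factor_le:
  assumes "mono X" and ZC: "\<And>x. Z (C x) = X x" and "covers_step C y"
  shows "Z y \<le> Z (y + 1)"
proof -
  obtain x x' where "x \<le> x'" "C x = y" "C x' = y + 1"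
    using \<open>covers_step C y\<close> unfolding covers_step_def by blast
  then show ?thesis
    using monoD[OF \<open>mono X\<close>] ZC by metis
qed

lemma lam_rep_factor_shift:
  assumes C: "lam_rep m n C" and X: "lam_rep m k X" and ZC: "\<And>x. Z (C x) = X x"
  shows "Z (C x + int n + 1) = Z (C x) + int k + 1"
proof -
  have "Z (C x + int n + 1) = Z (C (x + int m + 1))"
    using C unfolding lam_rep_def by simp
  then show ?thesis
    using X ZC unfolding lam_rep_def by simp
qed

lemma lam_rep_glue:
  assumes C: "lam_rep m n C" and D: "lam_rep m' n D"
    and X: "lam_rep m k X" and Y: "lam_rep m' k Y"
    and overlap: "\<And>x x'. C x = D x' \<Longrightarrow> X x = Y x'"
    and X_fibres: "\<And>x1 x2. C x1 = C x2 \<Longrightarrow> X x1 = X x2"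
    and Y_fibres: "\<And>x1 x2. D x1 = D x2 \<Longrightarrow> Y x1 = Y x2"
    and steps: "\<And>y. covers_step C y \<or> covers_step D y"
  obtains Z where "lam_rep n k Z" "\<And>x. Z (C x) = X x" "\<And>x. Z (D x) = Y x"
proof
  define Z where "Z y = (if y \<in> range C then X (inv C y) else Y (inv D y))" for y
  show ZC: "Z (C x) = X x" for x
  proof -
    have "C (inv C (C x)) = C x"
      by (simp add: f_inv_into_f)
    then show ?thesis
      unfolding Z_def by (simp add: X_fibres[of "inv C (C x)" x])
  qed
  show ZD: "Z (D x) = Y x" for x
  proof (cases "D x \<in> range C")
    case True
    then have "C (inv C (D x)) = D x"
      by (rule f_inv_into_f)
    then show ?thesis
      unfolding Z_def using True overlap by simp
  next
    case False
    have "D (inv D (D x)) = D x"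
      by (simp add: f_inv_into_f)
    then show ?thesis
      unfolding Z_def using False by (simp add: Y_fibres[of "inv D (D x)" x])
  qed
  have "mono X" "mono Y"
    using X Y unfolding lam_rep_def by auto
  then have "mono Z"
    using steps covers_step_factor_le[of X Z C] covers_step_factor_le[of Y Z D] ZC ZD
    by (intro mono_int_stepI) blast
  moreover have "Z (y + int n + 1) = Z y + int k + 1" for y
    using steps[of y] covers_step_in_range lam_rep_factor_shift[OF C X ZC]
      lam_rep_factor_shift[OF D Y ZD] by blast
  ultimately show "lam_rep n k Z"
    unfolding lam_rep_def by blast
qed

lemma lam_rep_factor:
  assumes C: "lam_rep m n C" and D: "lam_rep m' n D"
    and X: "lam_rep m k X" and Y: "lam_rep m' k Y"
    and cocone: "\<And>x. X (A x) = Y (B x)"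
    and overlap: "\<And>x x'. C x = D x' \<Longrightarrow> \<exists>l. A l = x \<and> B l = x'"
    and C_fibres: "\<And>x1 x2. C x1 = C x2 \<Longrightarrow> x1 \<noteq> x2 \<Longrightarrow> C x1 \<in> range D"
    and D_fibres: "\<And>x1 x2. D x1 = D x2 \<Longrightarrow> x1 \<noteq> x2 \<Longrightarrow> D x1 \<in> range C"
    and steps: "\<And>y. covers_step C y \<or> covers_step D y"
  obtains Z where "lam_rep n k Z" "\<And>x. Z (C x) = X x" "\<And>x. Z (D x) = Y x"
proof (rule lam_rep_glue[OF C D X Y _ _ _ steps])
  show XY: "X x = Y x'" if "C x = D x'" for x x'
    using overlap[OF that] cocone by auto
  show "X x1 = X x2" if eq: "C x1 = C x2" for x1 x2
  proof (cases "x1 = x2")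
    case False
    then obtain x' where "C x1 = D x'"
      using C_fibres[OF eq] by auto
    then show ?thesis
      using XY eq by metis
  qed simp
  show "Y x1 = Y x2" if eq: "D x1 = D x2" for x1 x2
  proof (cases "x1 = x2")
    case False
    then obtain x where "C x = D x1"
      using D_fibres[OF eq] by auto
    then show ?thesis
      using XY eq by metis
  qed simp
qed (rule that)

lemma lam_pushoutI:
  assumes A: "lam_rep p m A" and B: "lam_rep p m' B"
    and C: "lam_rep m n C" and D: "lam_rep m' n D"
    and commute: "\<And>x. C (A x) = D (B x)"
    and overlap: "\<And>x x'. C x = D x' \<Longrightarrow> \<exists>l. A l = x \<and> B l = x'"
    and C_fibres: "\<And>x1 x2. C x1 = C x2 \<Longrightarrow> x1 \<noteq> x2 \<Longrightarrow> C x1 \<in> range D"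
    and D_fibres: "\<And>x1 x2. D x1 = D x2 \<Longrightarrow> x1 \<noteq> x2 \<Longrightarrow> D x1 \<in> range C"
    and steps: "\<And>y. covers_step C y \<or> covers_step D y"
  shows "lam_pushout p A m B m' C D n"
  unfolding lam_pushout_def
proof (intro conjI allI impI)
  show "lam_eq n (C \<circ> A) (D \<circ> B)"
    unfolding lam_eq_def by (simp add: commute)
next
  fix k X Y
  assume "lam_rep m k X \<and> lam_rep m' k Y \<and> lam_eq k (X \<circ> A) (Y \<circ> B)"
  then have X: "lam_rep m k X" and Y: "lam_rep m' k Y"
    and "\<exists>j. \<forall>x. X (A x) = Y (B x) + j * (int k + 1)"
    unfolding lam_eq_def by auto
  then obtain j where j: "\<And>x. X (A x) = Y (B x) + j * (int k + 1)"
    by blast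
  \<comment> \<open>Shift Y so that the cocone commutes on the nose rather than up to a multiple of k + 1.\<close>
  define Y' where "Y' x = Y x + j * (int k + 1)" for x
  have Y': "lam_rep m' k Y'"
    using Y unfolding lam_rep_def mono_def Y'_def by auto
  have cocone: "X (A x) = Y' (B x)" for x
    using j unfolding Y'_def by simp
  obtain Z where Z: "lam_rep n k Z" and ZC: "\<And>x. Z (C x) = X x" and ZD: "\<And>x. Z (D x) = Y' x"
    using lam_rep_factor[where A = A and B = B, OF C D X Y' cocone] overlap C_fibres D_fibres steps
    by blast
  show "\<exists>Z. lam_rep n k Z \<and> lam_eq k (Z \<circ> C) X \<and> lam_eq k (Z \<circ> D) Y \<and>
      (\<forall>W. lam_rep n k W \<and> lam_eq k (W \<circ> C) X \<and> lam_eq k (W \<circ> D) Y \<longrightarrow> lam_eq k W Z)"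
  proof (intro exI[of _ Z] conjI allI impI)
    show "lam_eq k (Z \<circ> C) X" "lam_eq k (Z \<circ> D) Y"
      unfolding lam_eq_def using ZC ZD Y'_def by auto
  next
    fix W
    assume "lam_rep n k W \<and> lam_eq k (W \<circ> C) X \<and> lam_eq k (W \<circ> D) Y"
    then obtain a b where a: "\<And>x. W (C x) = X x + a * (int k + 1)"
      and b: "\<And>x. W (D x) = Y x + b * (int k + 1)"
      unfolding lam_eq_def by auto
    \<comment> \<open>Comparing both expressions for W (C (A 0)) = W (D (B 0)) pins down b.\<close>
    have "b * (int k + 1) = (a + j) * (int k + 1)"
      using a[of "A 0"] b[of "B 0"] commute[of 0] j[of 0] by (simp add: algebra_simps)
    then have "b = a + j"
      by simp
    then have "W (D x) = Z (D x) + a * (int k + 1)" for x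
      using b ZD unfolding Y'_def by (simp add: algebra_simps)
    moreover have "W (C x) = Z (C x) + a * (int k + 1)" for x
      using a ZC by simp
    ultimately have "W y = Z y + a * (int k + 1)" for y
      using steps[of y] covers_step_in_range by blast
    then show "lam_eq k W Z"
      unfolding lam_eq_def by blast
  qed (fact Z)
qed (fact A B C D)+

section \<open>The canonical functor from Delta to Lambda\<close>

lemma int_decompose:
  fixes x :: int
  obtains a t where "a \<le> m" "x = int a + t * (int m + 1)"
proof
  show "nat (x mod (int m + 1)) \<le> m"
    using pos_mod_bound[of "int m + 1" x] by linarith
  show "x = int (nat (x mod (int m + 1))) + x div (int m + 1) * (int m + 1)"
    by (simp add: mod_div_mult_eq)
qed

lemma lam_of_canonical:
  assumes "a \<le> m"
  shows "lam_of m n f (int a + t * (int m + 1)) = int (f a) + t * (int n + 1)"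
  using assms by (simp add: lam_of_def)

lemma canonical_eq_iff:
  assumes "a \<le> n" "b \<le> n"
  shows "int a + s * (int n + 1) = int b + t * (int n + 1) \<longleftrightarrow> a = b \<and> s = t"
proof
  assume eq: "int a + s * (int n + 1) = int b + t * (int n + 1)"
  have "a = b"
    using arg_cong[OF eq, of "\<lambda>x. x mod (int n + 1)"] assms by simp
  with eq show "a = b \<and> s = t"
    by simp
qed simp

lemma delta_hom_bound: "delta_hom m n f \<Longrightarrow> a \<le> m \<Longrightarrow> f a \<le> n"
  unfolding delta_hom_def by blast

lemma lam_of_le_succ:
  assumes f: "delta_hom m n f"
  shows "lam_of m n f y \<le> lam_of m n f (y + 1)"
proof -
  obtain a t where a: "a \<le> m" and y: "y = int a + t * (int m + 1)"
    by (rule int_decompose)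
  show ?thesis
  proof (cases "a < m")
    case True
    have y1: "y + 1 = int (Suc a) + t * (int m + 1)"
      using y by simp
    have "lam_of m n f (y + 1) = int (f (Suc a)) + t * (int n + 1)"
      unfolding y1 using True by (intro lam_of_canonical) simp
    moreover have "f a \<le> f (Suc a)"
      using f True unfolding delta_hom_def by simp
    ultimately show ?thesis
      using a y by (simp add: lam_of_canonical)
  next
    case False
    then have y1: "y + 1 = int 0 + (t + 1) * (int m + 1)"
      using a y by (simp add: algebra_simps)
    have "lam_of m n f (y + 1) = int (f 0) + (t + 1) * (int n + 1)"
      unfolding y1 by (rule lam_of_canonical) simp
    moreover have "lam_of m n f y = int (f a) + t * (int n + 1)"
      unfolding y by (rule lam_of_canonical[OF a])
    ultimately show ?thesis
      using delta_hom_bound[OF f a] by (simp add: algebra_simps)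
  qed
qed

lemma lam_of_shift: "lam_of m n f (y + int m + 1) = lam_of m n f y + int n + 1"
proof -
  obtain a t where a: "a \<le> m" and y: "y = int a + t * (int m + 1)"
    by (rule int_decompose)
  then have y1: "y + int m + 1 = int a + (t + 1) * (int m + 1)"
    by (simp add: algebra_simps)
  have "lam_of m n f (y + int m + 1) = int (f a) + (t + 1) * (int n + 1)"
    unfolding y1 by (rule lam_of_canonical[OF a])
  moreover have "lam_of m n f y = int (f a) + t * (int n + 1)"
    unfolding y by (rule lam_of_canonical[OF a])
  ultimately show ?thesis
    by (simp add: algebra_simps)
qed

lemma lam_of_rep: "delta_hom m n f \<Longrightarrow> lam_rep m n (lam_of m n f)"
  unfolding lam_rep_def using mono_int_stepI lam_of_le_succ lam_of_shift by blast

lemma lam_of_comp: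
  assumes "delta_hom p m g"
  shows "lam_of m n f (lam_of p m g x) = lam_of p n (f \<circ> g) x"
proof -
  obtain a t where a: "a \<le> p" and x: "x = int a + t * (int p + 1)"
    by (rule int_decompose)
  then show ?thesis
    using delta_hom_bound[OF assms a] by (simp add: lam_of_canonical)
qed

lemma lam_of_cong: "(\<And>a. a \<le> m \<Longrightarrow> f a = f' a) \<Longrightarrow> lam_of m n f = lam_of m n f'"
proof
  fix x
  assume eq: "\<And>a. a \<le> m \<Longrightarrow> f a = f' a"
  obtain a t where "a \<le> m" "x = int a + t * (int m + 1)"
    by (rule int_decompose)
  then show "lam_of m n f x = lam_of m n f' x"
    by (simp add: lam_of_canonical eq)
qed

lemma lam_of_eqE:
  assumes f: "delta_hom m n f" and f': "delta_hom m' n f'"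
    and eq: "lam_of m n f x = lam_of m' n f' x'"
  obtains a a' t where "a \<le> m" "a' \<le> m'" "f a = f' a'"
    "x = int a + t * (int m + 1)" "x' = int a' + t * (int m' + 1)"
proof -
  obtain a t where a: "a \<le> m" and x: "x = int a + t * (int m + 1)"
    by (rule int_decompose)
  obtain a' t' where a': "a' \<le> m'" and x': "x' = int a' + t' * (int m' + 1)"
    by (rule int_decompose)
  have "f a = f' a' \<and> t = t'"
    using eq a a' x x' delta_hom_bound[OF f a] delta_hom_bound[OF f' a']
    by (simp add: lam_of_canonical canonical_eq_iff)
  then show ?thesis
    using that a a' x x' by blast
qed

lemma lam_of_covers_step:
  assumes f: "delta_hom m n f" and left: "left_active f"
    and i: "i \<le> n" "i \<in> f ` {..m}" and next_i: "i < n \<Longrightarrow> Suc i \<in> f ` {..m}"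
  shows "covers_step (lam_of m n f) (int i + t * (int n + 1))"
proof -
  obtain a where a: "a \<le> m" "f a = i"
    using i by blast
  have Ca: "lam_of m n f (int a + t * (int m + 1)) = int i + t * (int n + 1)"
    using lam_of_canonical[OF a(1)] a(2) by simp
  show ?thesis
  proof (cases "i < n")
    case True
    then have "Suc i \<in> f ` {..m}"
      by (rule next_i)
    then obtain b where b: "b \<le> m" "f b = Suc i"
      by auto
    have "\<not> b < a"
    proof
      assume "b < a"
      then have "f b \<le> f a"
        using f a(1) unfolding delta_hom_def by simp
      then show False
        using a b by simp
    qed
    moreover have "lam_of m n f (int b + t * (int m + 1)) = int i + t * (int n + 1) + 1"
      using lam_of_canonical[OF b(1)] b(2) by simp
    ultimately show ?thesis
      using covers_stepI[where F = "lam_of m n f", OF Ca] by simp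
  next
    case False
    \<comment> \<open>Wrap-around: the step from n goes to the point 0 of the next period, and f 0 = 0.\<close>
    have "lam_of m n f (int 0 + (t + 1) * (int m + 1)) = int (f 0) + (t + 1) * (int n + 1)"
      by (rule lam_of_canonical) simp
    also have "\<dots> = int i + t * (int n + 1) + 1"
      using left False i(1) unfolding left_active_def by (simp add: algebra_simps)
    finally have "lam_of m n f (int 0 + (t + 1) * (int m + 1)) = int i + t * (int n + 1) + 1" .
    moreover have "int a + t * (int m + 1) \<le> int 0 + (t + 1) * (int m + 1)"
      using a(1) by (simp add: algebra_simps)
    ultimately show ?thesis
      by (rule covers_stepI[where F = "lam_of m n f", OF Ca])
  qed
qed

section \<open>Pullbacks and compatible claws in Delta\<close>

lemma delta_pullback_point:
  assumes "delta_pullback p g m g' m' f f' n" "a \<le> m" "a' \<le> m'" "f a = f' a'"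
  obtains l where "l \<le> p" "g l = a" "g' l = a'"
proof -
  have "delta_hom 0 m (\<lambda>_. a)" "delta_hom 0 m' (\<lambda>_. a')"
    using assms unfolding delta_hom_def by auto
  moreover have "\<forall>i\<le>0. f a = f' a'"
    using assms by simp
  ultimately obtain u where "delta_hom 0 p u" "\<forall>i\<le>0. g (u i) = a \<and> g' (u i) = a'"
    using assms(1) unfolding delta_pullback_def by blast
  then show ?thesis
    using that unfolding delta_hom_def by blast
qed

lemma compatible_sym: "compatible m f m' f' n \<Longrightarrow> compatible m' f' m f n"
  unfolding compatible_def by blast

lemma card_fibre_eq_1_imp_in_image:
  assumes "card {j. j \<le> m \<and> f j = i} = 1"
  shows "i \<in> f ` {..m}"
proof -
  obtain j where "{j. j \<le> m \<and> f j = i} = {j}"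
    using card_1_singletonE[OF assms] .
  then have "j \<le> m \<and> f j = i"
    by blast
  then show ?thesis
    by auto
qed

lemma compatible_covers:
  assumes "compatible m f m' f' n" "i \<le> n"
  shows "i \<in> f ` {..m} \<or> i \<in> f' ` {..m'}"
proof -
  have "\<forall>i\<le>n. card {j. j \<le> m \<and> f j = i} = 1 \<or> card {j. j \<le> m' \<and> f' j = i} = 1"
    using assms(1) unfolding compatible_def by (rule conjunct1)
  then have "card {j. j \<le> m \<and> f j = i} = 1 \<or> card {j. j \<le> m' \<and> f' j = i} = 1"
    using assms(2) by simp
  then show ?thesis
    using card_fibre_eq_1_imp_in_image by force
qed

lemma compatible_fibre:
  assumes "compatible m f m' f' n" "f a \<le> n" "a \<le> m" "b \<le> m" "a \<noteq> b" "f a = f b"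
  shows "f a \<in> f' ` {..m'}"
proof -
  have "{a, b} \<subseteq> {j. j \<le> m \<and> f j = f a}"
    using assms by auto
  then have "2 \<le> card {j. j \<le> m \<and> f j = f a}"
    using card_mono[of "{j. j \<le> m \<and> f j = f a}" "{a, b}"] \<open>a \<noteq> b\<close> by simp
  then show ?thesis
    using assms(1,2) card_fibre_eq_1_imp_in_image unfolding compatible_def by force
qed

section \<open>The image of the pullback square in Lambda\<close>

lemma lam_of_commute:
  assumes "delta_pullback p g m g' m' f f' n"
  shows "lam_of m n f (lam_of p m g x) = lam_of m' n f' (lam_of p m' g' x)"
proof -
  have "delta_hom p m g" "delta_hom p m' g'" "\<And>i. i \<le> p \<Longrightarrow> (f \<circ> g) i = (f' \<circ> g') i"
    using assms unfolding delta_pullback_def by auto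
  then show ?thesis
    by (simp add: lam_of_comp lam_of_cong[of p "f \<circ> g" "f' \<circ> g'"])
qed

lemma lam_of_overlap_lifts:
  assumes pb: "delta_pullback p g m g' m' f f' n"
    and eq: "lam_of m n f x = lam_of m' n f' x'"
  shows "\<exists>l. lam_of p m g l = x \<and> lam_of p m' g' l = x'"
proof -
  have f: "delta_hom m n f" and f': "delta_hom m' n f'"
    using pb unfolding delta_pullback_def by auto
  obtain a a' t where a: "a \<le> m" "a' \<le> m'" "f a = f' a'"
    and x: "x = int a + t * (int m + 1)" "x' = int a' + t * (int m' + 1)"
    using lam_of_eqE[OF f f' eq] .
  obtain l where "l \<le> p" "g l = a" "g' l = a'"
    using delta_pullback_point[OF pb a] .
  then show ?thesis
    using x by (intro exI[of _ "int l + t * (int p + 1)"]) (simp add: lam_of_canonical)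
qed

lemma lam_of_fibre:
  assumes f: "delta_hom m n f" and f': "delta_hom m' n f'" and comp: "compatible m f m' f' n"
    and eq: "lam_of m n f x1 = lam_of m n f x2" and ne: "x1 \<noteq> x2"
  shows "lam_of m n f x1 \<in> range (lam_of m' n f')"
proof -
  obtain a b t where ab: "a \<le> m" "b \<le> m" "f a = f b"
    and x: "x1 = int a + t * (int m + 1)" "x2 = int b + t * (int m + 1)"
    using lam_of_eqE[OF f f eq] .
  have "a \<noteq> b"
    using ne x by auto
  then obtain c where "c \<le> m'" "f' c = f a"
    using compatible_fibre[OF comp delta_hom_bound[OF f] ab(1,2) _ ab(3)] ab by force
  then have "lam_of m' n f' (int c + t * (int m' + 1)) = lam_of m n f x1"
    using ab x by (simp add: lam_of_canonical)
  then show ?thesis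
    by (metis rangeI)
qed

lemma lam_of_jointly_cover_steps:
  assumes f: "delta_hom m n f" and f': "delta_hom m' n f'"
    and left: "left_active f" "left_active f'" and comp: "compatible m f m' f' n"
  shows "covers_step (lam_of m n f) y \<or> covers_step (lam_of m' n f') y"
proof -
  obtain i t where i: "i \<le> n" and y: "y = int i + t * (int n + 1)"
    by (rule int_decompose)
  show ?thesis
  proof (cases "i < n")
    case True
    moreover have "\<forall>i. 0 < i \<and> i \<le> n \<longrightarrow> {i - 1, i} \<subseteq> f ` {..m} \<or> {i - 1, i} \<subseteq> f' ` {..m'}"
      using comp unfolding compatible_def by blast
    ultimately have "{i, Suc i} \<subseteq> f ` {..m} \<or> {i, Suc i} \<subseteq> f' ` {..m'}"
      by (metis Suc_leI diff_Suc_1 zero_less_Suc)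
    then show ?thesis
      using lam_of_covers_step[OF f left(1) i(1)] lam_of_covers_step[OF f' left(2) i(1)] y
      by auto
  next
    case False
    then show ?thesis
      using compatible_covers[OF comp i] lam_of_covers_step[OF f left(1) i]
        lam_of_covers_step[OF f' left(2) i] y by auto
  qed
qed

theorem lemma4p2p8:
  fixes m m' n p :: nat and f f' g g' :: "nat \<Rightarrow> nat"
  assumes "delta_hom m n f" and "delta_hom m' n f'"
    and "left_active f" and "left_active f'"
    and "compatible m f m' f' n"
    and "delta_pullback p g m g' m' f f' n"
  shows "lam_pushout p (lam_of p m g) m (lam_of p m' g') m'
           (lam_of m n f) (lam_of m' n f') n"
proof (rule lam_pushoutI)
  have "delta_hom p m g" "delta_hom p m' g'"
    using assms(6) unfolding delta_pullback_def by auto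
  then show "lam_rep p m (lam_of p m g)" "lam_rep p m' (lam_of p m' g')"
    "lam_rep m n (lam_of m n f)" "lam_rep m' n (lam_of m' n f')"
    using assms(1,2) by (simp_all add: lam_of_rep)
  show "lam_of m n f (lam_of p m g x) = lam_of m' n f' (lam_of p m' g' x)" for x
    using lam_of_commute[OF assms(6)] .
  show "\<exists>l. lam_of p m g l = x \<and> lam_of p m' g' l = x'"
    if "lam_of m n f x = lam_of m' n f' x'" for x x'
    using lam_of_overlap_lifts[OF assms(6) that] .
  show "lam_of m n f x1 \<in> range (lam_of m' n f')"
    if "lam_of m n f x1 = lam_of m n f x2" "x1 \<noteq> x2" for x1 x2
    using lam_of_fibre[OF assms(1,2,5) that] .
  show "lam_of m' n f' x1 \<in> range (lam_of m n f)"
    if "lam_of m' n f' x1 = lam_of m' n f' x2" "x1 \<noteq> x2" for x1 x2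
    using lam_of_fibre[OF assms(2,1) compatible_sym[OF assms(5)] that] .
  show "covers_step (lam_of m n f) y \<or> covers_step (lam_of m' n f') y" for y
    using lam_of_jointly_cover_steps[OF assms(1-5)] .
qed

end
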